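(* Let $S$ be a $\Gamma$-hemiring and let $\mu$ be a fuzzy h-ideal of $S$. Let $\beta\in(0,1]$ and $\alpha\in[0,1-\sup\{\mu(y):y\in S\}]$, and define $\mu_{\beta,\alpha}(y)=\beta\mu(y)+\alpha$ for $y\in S$. Then for every $x\in S$, $\langle x,\mu_{\beta,\alpha}\rangle$ is a fuzzy h-ideal of $S$.
   Context: A $\Gamma$-hemiring is a pair of additive commutative semigroups with zero $S$ and $\Gamma$ with a map $S\times\Gamma\times S\to S$, $(a,\alpha,b)\mapsto a\alpha b$, such that for all $a,b,c\in S$, $\alpha,\beta\in\Gamma$: $(a+b)\alpha c=a\alpha c+b\alpha c$; $a\alpha(b+c)=a\alpha b+a\alpha c$; $a(\alpha+\beta)b=a\alpha b+a\beta b$; $a\alpha(b\beta c)=(a\alpha b)\beta c$; $0\alpha a=0=a\alpha0$; $a0b=0=b0a$. A fuzzy h-ideal of $S$ is a map $\mu:S\to[0,1]$, not identically $0$, such that for all $x,y,a,b,z\in S$, $\gamma\in\Gamma$: $\mu(x+y)\ge\min\{\mu(x),\mu(y)\}$; $\mu(x\gamma y)\ge\mu(x)$ and $\mu(x\gamma y)\ge\mu(y)$; $x+a+z=b+z$ implies $\mu(x)\ge\min\{\mu(a),\mu(b)\}$. The extension of a fuzzy subset $\mu$ by $x$ is $\langle x,\mu\rangle(y)=\inf_{s\in S,\ \alpha,\gamma\in\Gamma}\mu(x\alpha s\gamma y)$ (here $\alpha,\gamma$ are bound variables ranging over $\Gamma$, unrelated to the real number $\alpha$ above). *)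

theory Defs
  imports "HOL-Analysis.Analysis"
begin

text \<open>A Gamma-hemiring: S and Gamma are commutative monoids (additive commutative
  semigroups with zero), modelled by types of class comm_monoid_add; the ternary
  operation is m a g b = a g b.\<close>
definition gamma_hemiring :: "('s::comm_monoid_add \<Rightarrow> 'g::comm_monoid_add \<Rightarrow> 's \<Rightarrow> 's) \<Rightarrow> bool" where
  "gamma_hemiring m \<longleftrightarrow>
     (\<forall>a b c g. m (a + b) g c = m a g c + m b g c) \<and>
     (\<forall>a b c g. m a g (b + c) = m a g b + m a g c) \<and>
     (\<forall>a b g h. m a (g + h) b = m a g b + m a h b) \<and>
     (\<forall>a b c g h. m a g (m b h c) = m (m a g b) h c) \<and>
     (\<forall>a g. m 0 g a = 0 \<and> m a g 0 = 0) \<and>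
     (\<forall>a b. m a 0 b = 0 \<and> m b 0 a = 0)"

definition fuzzy_h_ideal :: "('s::comm_monoid_add \<Rightarrow> 'g::comm_monoid_add \<Rightarrow> 's \<Rightarrow> 's) \<Rightarrow> ('s \<Rightarrow> real) \<Rightarrow> bool" where
  "fuzzy_h_ideal m \<mu> \<longleftrightarrow>
     (\<forall>x. 0 \<le> \<mu> x \<and> \<mu> x \<le> 1) \<and>
     (\<exists>x. \<mu> x \<noteq> 0) \<and>
     (\<forall>x y. \<mu> (x + y) \<ge> min (\<mu> x) (\<mu> y)) \<and>
     (\<forall>x y g. \<mu> (m x g y) \<ge> \<mu> x \<and> \<mu> (m x g y) \<ge> \<mu> y) \<and>
     (\<forall>x a b z. x + a + z = b + z \<longrightarrow> \<mu> x \<ge> min (\<mu> a) (\<mu> b))"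

text \<open>Extension of \<mu> by x: <x,\<mu>>(y) = inf over s, alpha, gamma of \<mu>(x alpha s gamma y).\<close>
definition extension :: "('s \<Rightarrow> 'g \<Rightarrow> 's \<Rightarrow> 's) \<Rightarrow> 's \<Rightarrow> ('s \<Rightarrow> real) \<Rightarrow> 's \<Rightarrow> real" where
  "extension m x \<mu> y = (INF p\<in>(UNIV :: ('s \<times> 'g \<times> 'g) set).
      \<mu> (m (m x (fst (snd p)) (fst p)) (snd (snd p)) y))"

end

theory Submission
  imports Defs
begin

text \<open>The theorem splits into two independent facts: the affine rescaling
  \<open>\<beta> \<mu> + \<alpha>\<close> of a fuzzy h-ideal is again a fuzzy h-ideal (the bound on \<open>\<alpha>\<close> keeps
  its values in \<open>[0,1]\<close>, and a strictly increasing map preserves the min-type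
  inequalities), and the extension of any fuzzy h-ideal is a fuzzy h-ideal.
  For the latter, each defining inequality of \<open>\<langle>x,\<mu>\<rangle>\<close> at \<open>y\<close> is checked on
  every term \<open>\<mu>(x\<alpha>s\<gamma>y)\<close> of the infimum, using distributivity of \<open>x\<alpha>s\<gamma>_\<close> for
  the additive conditions and associativity for absorption; at \<open>0\<close> the
  infimum collapses to \<open>\<mu> 0 > 0\<close>.\<close>

lemma gamma_hemiringD:
  assumes "gamma_hemiring m"
  shows gamma_hemiring_distrib_right: "m a g (b + c) = m a g b + m a g c"
    and gamma_hemiring_assoc: "m a g (m b h c) = m (m a g b) h c"
    and gamma_hemiring_zero_right: "m a g 0 = 0"
  using assms unfolding gamma_hemiring_def by auto

lemma fuzzy_h_idealD:
  assumes "fuzzy_h_ideal m \<mu>"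
  shows fuzzy_h_ideal_nonneg: "0 \<le> \<mu> x"
    and fuzzy_h_ideal_le_one: "\<mu> x \<le> 1"
    and fuzzy_h_ideal_nonzero: "\<exists>z. \<mu> z \<noteq> 0"
    and fuzzy_h_ideal_add: "min (\<mu> x) (\<mu> y) \<le> \<mu> (x + y)"
    and fuzzy_h_ideal_left: "\<mu> x \<le> \<mu> (m x g y)"
    and fuzzy_h_ideal_right: "\<mu> y \<le> \<mu> (m x g y)"
    and fuzzy_h_ideal_h_closed: "x + a + z = b + z \<Longrightarrow> min (\<mu> a) (\<mu> b) \<le> \<mu> x"
  using assms unfolding fuzzy_h_ideal_def by blast+

lemma fuzzy_h_ideal_zero_pos:
  assumes "gamma_hemiring m" "fuzzy_h_ideal m \<mu>"
  shows "0 < \<mu> 0"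
proof -
  obtain z where z: "\<mu> z \<noteq> 0" using fuzzy_h_ideal_nonzero[OF assms(2)] by blast
  have "\<mu> z \<le> \<mu> (m z 0 0)" by (rule fuzzy_h_ideal_left[OF assms(2)])
  then have "\<mu> z \<le> \<mu> 0" by (simp add: gamma_hemiring_zero_right[OF assms(1)])
  with z fuzzy_h_ideal_nonneg[OF assms(2), of z] show ?thesis by linarith
qed

lemma fuzzy_h_ideal_affine:
  assumes \<mu>: "fuzzy_h_ideal m \<mu>"
    and "0 < \<beta>" "\<beta> \<le> 1" "0 \<le> \<alpha>" "\<alpha> \<le> 1 - (SUP y. \<mu> y)"
  shows "fuzzy_h_ideal m (\<lambda>y. \<beta> * \<mu> y + \<alpha>)"
proof -
  have "bdd_above (range \<mu>)"
    using fuzzy_h_ideal_le_one[OF \<mu>] by (auto intro: bdd_aboveI[where M = 1])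
  then have \<mu>_le: "\<mu> y \<le> 1 - \<alpha>" for y
    using cSUP_upper[OF UNIV_I, of \<mu> y] assms(5) by simp
  have mono: "\<beta> * \<mu> u + \<alpha> \<le> \<beta> * \<mu> v + \<alpha> \<longleftrightarrow> \<mu> u \<le> \<mu> v" for u v
    using \<open>0 < \<beta>\<close> by simp
  have mono_min: "min (\<beta> * \<mu> a + \<alpha>) (\<beta> * \<mu> b + \<alpha>) \<le> \<beta> * \<mu> u + \<alpha>"
    if "min (\<mu> a) (\<mu> b) \<le> \<mu> u" for a b u
    using that mono by (auto simp: min_def split: if_splits)
  have upper: "\<beta> * \<mu> y + \<alpha> \<le> 1" for y
  proof -
    have "\<beta> * \<mu> y \<le> \<beta> * (1 - \<alpha>)" using \<mu>_le \<open>0 < \<beta>\<close> by simp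
    also have "\<dots> \<le> 1 - \<alpha>"
      using assms(3) \<mu>_le[of y] fuzzy_h_ideal_nonneg[OF \<mu>, of y]
      by (intro mult_left_le_one_le) (use \<open>0 < \<beta>\<close> in linarith)+
    finally show ?thesis by simp
  qed
  obtain z where "\<mu> z \<noteq> 0" using fuzzy_h_ideal_nonzero[OF \<mu>] by blast
  then have "\<beta> * \<mu> z + \<alpha> \<noteq> 0"
    using fuzzy_h_ideal_nonneg[OF \<mu>, of z] \<open>0 < \<beta>\<close> \<open>0 \<le> \<alpha>\<close>
    by (smt (verit) mult_pos_pos)
  then show ?thesis
    unfolding fuzzy_h_ideal_def
  proof (intro conjI allI impI exI)
    fix x y g a b w
    show "0 \<le> \<beta> * \<mu> x + \<alpha>"
      using fuzzy_h_ideal_nonneg[OF \<mu>] \<open>0 < \<beta>\<close> \<open>0 \<le> \<alpha>\<close> by simp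
    show "\<beta> * \<mu> x + \<alpha> \<le> 1" by (rule upper)
    show "min (\<beta> * \<mu> x + \<alpha>) (\<beta> * \<mu> y + \<alpha>) \<le> \<beta> * \<mu> (x + y) + \<alpha>"
      by (rule mono_min) (rule fuzzy_h_ideal_add[OF \<mu>])
    show "\<beta> * \<mu> x + \<alpha> \<le> \<beta> * \<mu> (m x g y) + \<alpha>"
      using mono fuzzy_h_ideal_left[OF \<mu>] by blast
    show "\<beta> * \<mu> y + \<alpha> \<le> \<beta> * \<mu> (m x g y) + \<alpha>"
      using mono fuzzy_h_ideal_right[OF \<mu>] by blast
    assume "x + a + w = b + w"
    then show "min (\<beta> * \<mu> a + \<alpha>) (\<beta> * \<mu> b + \<alpha>) \<le> \<beta> * \<mu> x + \<alpha>"
      by (intro mono_min fuzzy_h_ideal_h_closed[OF \<mu>])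
  qed
qed

lemma extension_le:
  assumes "bdd_below (range \<mu>)"
  shows "extension m x \<mu> y \<le> \<mu> (m (m x a s) g y)"
proof -
  have "bdd_below (range (\<lambda>p. \<mu> (m (m x (fst (snd p)) (fst p)) (snd (snd p)) y)))"
    using assms by (auto simp: bdd_below_def)
  from cINF_lower[OF this UNIV_I, of "(s, a, g)"] show ?thesis
    unfolding extension_def by simp
qed

lemma extension_greatest:
  assumes "\<And>s a g. c \<le> \<mu> (m (m x a s) g y)"
  shows "c \<le> extension m x \<mu> y"
  unfolding extension_def by (rule cINF_greatest) (auto intro: assms)

lemma extension_zero:
  assumes "gamma_hemiring m" "bdd_below (range \<mu>)"
  shows "extension m x \<mu> 0 = \<mu> 0"
  using extension_le[OF assms(2), of m x 0 0 0 0] extension_greatest[of "\<mu> 0" \<mu> m x 0]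
  by (simp add: gamma_hemiring_zero_right[OF assms(1)])

lemma fuzzy_h_ideal_extension:
  assumes hemi: "gamma_hemiring m" and \<mu>: "fuzzy_h_ideal m \<mu>"
  shows "fuzzy_h_ideal m (extension m x \<mu>)"
proof -
  have bdd: "bdd_below (range \<mu>)"
    using fuzzy_h_ideal_nonneg[OF \<mu>] by (auto intro: bdd_belowI[where m = 0])
  note le = extension_le[OF bdd, of m x]
  note distrib = gamma_hemiring_distrib_right[OF hemi]
  have min_le: "min (extension m x \<mu> a) (extension m x \<mu> b) \<le> \<mu> u"
    if "min (\<mu> (m (m x \<alpha> s) \<gamma> a)) (\<mu> (m (m x \<alpha> s) \<gamma> b)) \<le> \<mu> u" for a b u \<alpha> s \<gamma>
    using that le[of a \<alpha> s \<gamma>] le[of b \<alpha> s \<gamma>] by linarith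
  have "0 \<le> extension m x \<mu> y" for y
    by (rule extension_greatest) (rule fuzzy_h_ideal_nonneg[OF \<mu>])
  moreover have "extension m x \<mu> y \<le> 1" for y
    using le[of y 0 0 0] fuzzy_h_ideal_le_one[OF \<mu>] by (meson order_trans)
  moreover have "extension m x \<mu> 0 \<noteq> 0"
    using extension_zero[OF hemi bdd] fuzzy_h_ideal_zero_pos[OF hemi \<mu>] by simp
  moreover have "min (extension m x \<mu> y) (extension m x \<mu> z) \<le> extension m x \<mu> (y + z)"
    for y z
  proof (rule extension_greatest, rule min_le)
    fix s \<alpha> \<gamma>
    show "min (\<mu> (m (m x \<alpha> s) \<gamma> y)) (\<mu> (m (m x \<alpha> s) \<gamma> z)) \<le> \<mu> (m (m x \<alpha> s) \<gamma> (y + z))"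
      unfolding distrib by (rule fuzzy_h_ideal_add[OF \<mu>])
  qed
  moreover have "extension m x \<mu> y \<le> extension m x \<mu> (m y g z)" for y g z
  proof (rule extension_greatest)
    fix s \<alpha> \<gamma>
    have "extension m x \<mu> y \<le> \<mu> (m (m (m x \<alpha> s) \<gamma> y) g z)"
      using le[of y \<alpha> s \<gamma>] fuzzy_h_ideal_left[OF \<mu>] by (meson order_trans)
    then show "extension m x \<mu> y \<le> \<mu> (m (m x \<alpha> s) \<gamma> (m y g z))"
      by (simp add: gamma_hemiring_assoc[OF hemi])
  qed
  moreover have "extension m x \<mu> z \<le> extension m x \<mu> (m y g z)" for y g z
  proof (rule extension_greatest)
    fix s \<alpha> \<gamma>
    have "m (m x \<alpha> s) \<gamma> (m y g z) = m (m x \<alpha> (m s \<gamma> y)) g z"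
      by (simp only: gamma_hemiring_assoc[OF hemi])
    then show "extension m x \<mu> z \<le> \<mu> (m (m x \<alpha> s) \<gamma> (m y g z))"
      by (simp add: le)
  qed
  moreover have "min (extension m x \<mu> a) (extension m x \<mu> b) \<le> extension m x \<mu> y"
    if h: "y + a + z = b + z" for y a b z
  proof (rule extension_greatest, rule min_le)
    fix s \<alpha> \<gamma>
    let ?w = "m x \<alpha> s"
    have "m ?w \<gamma> y + m ?w \<gamma> a + m ?w \<gamma> z = m ?w \<gamma> b + m ?w \<gamma> z"
      using arg_cong[OF h, of "m ?w \<gamma>"] by (simp add: distrib)
    then show "min (\<mu> (m ?w \<gamma> a)) (\<mu> (m ?w \<gamma> b)) \<le> \<mu> (m ?w \<gamma> y)"
      by (rule fuzzy_h_ideal_h_closed[OF \<mu>])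
  qed
  ultimately show ?thesis
    unfolding fuzzy_h_ideal_def by blast
qed

theorem proposition3p13:
  fixes m :: "'s::comm_monoid_add \<Rightarrow> 'g::comm_monoid_add \<Rightarrow> 's \<Rightarrow> 's"
    and \<mu> :: "'s \<Rightarrow> real" and \<beta> \<alpha> :: real
  assumes "gamma_hemiring m"
    and "fuzzy_h_ideal m \<mu>"
    and "0 < \<beta>" "\<beta> \<le> 1"
    and "0 \<le> \<alpha>" "\<alpha> \<le> 1 - (SUP y. \<mu> y)"
  shows "\<forall>x. fuzzy_h_ideal m (extension m x (\<lambda>y. \<beta> * \<mu> y + \<alpha>))"
  using fuzzy_h_ideal_extension[OF assms(1) fuzzy_h_ideal_affine[OF assms(2-6)]] by blast

end
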